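(* If QEPmin is in the easy case, then CRQopt has a unique minimizer.
   Context: Let $A\in\mathbb{R}^{n\times n}$ be symmetric, $C\in\mathbb{R}^{n\times m}$ ($m<n$) full column rank, $b\in\mathbb{R}^m$, $n_0=C(C^{\top}C)^{-1}b$ with $\|n_0\|<1$, $\gamma=\sqrt{1-\|n_0\|^2}$, $P=I-C(C^{\top}C)^{-1}C^{\top}$ (orthogonal projector onto $\mathcal N(C^{\top})$), $b_0=PAn_0$, assumed nonzero. CRQopt: minimize $v^{\top}Av$ over $v\in\mathbb{R}^n$ subject to $v^{\top}v=1$ and $C^{\top}v=b$. QEPmin: minimize $\lambda$ over pairs $(\lambda,z)$ with $\lambda\in\mathbb{R}$, $0\neq z\in\mathcal N(C^{\top})$ and $(PAP-\lambda I)^2z=\gamma^{-2}b_0b_0^{\top}z$. QEPmin is in the hard case if it has a minimizer $(\lambda_*,z_* )$ with $b_0^{\top}z_*=0$; otherwise it is in the easy case. *)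

theory Defs
  imports "HOL-Analysis.Analysis"
begin

definition n0_vec :: "real^'m^'n \<Rightarrow> real^'m \<Rightarrow> real^'n" where
  "n0_vec C b = C *v (matrix_inv (transpose C ** C) *v b)"

definition gam :: "real^'m^'n \<Rightarrow> real^'m \<Rightarrow> real" where
  "gam C b = sqrt (1 - (norm (n0_vec C b))\<^sup>2)"

definition projP :: "real^'m^'n \<Rightarrow> real^'n^'n" where
  "projP C = mat 1 - C ** matrix_inv (transpose C ** C) ** transpose C"

definition b0_vec :: "real^'n^'n \<Rightarrow> real^'m^'n \<Rightarrow> real^'m \<Rightarrow> real^'n" where
  "b0_vec A C b = projP C *v (A *v n0_vec C b)"

definition qep_feasible :: "real^'n^'n \<Rightarrow> real^'m^'n \<Rightarrow> real^'m \<Rightarrow> real \<Rightarrow> real^'n \<Rightarrow> bool" where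
  "qep_feasible A C b lam z \<longleftrightarrow>
     z \<noteq> 0 \<and> transpose C *v z = 0 \<and>
     (let M = projP C ** A ** projP C - lam *\<^sub>R mat 1
      in M *v (M *v z) = (inverse ((gam C b)\<^sup>2) * (b0_vec A C b \<bullet> z)) *\<^sub>R b0_vec A C b)"

definition qep_minimizer :: "real^'n^'n \<Rightarrow> real^'m^'n \<Rightarrow> real^'m \<Rightarrow> real \<Rightarrow> real^'n \<Rightarrow> bool" where
  "qep_minimizer A C b lam z \<longleftrightarrow>
     qep_feasible A C b lam z \<and> (\<forall>lam' z'. qep_feasible A C b lam' z' \<longrightarrow> lam \<le> lam')"

definition qep_hard_case :: "real^'n^'n \<Rightarrow> real^'m^'n \<Rightarrow> real^'m \<Rightarrow> bool" where
  "qep_hard_case A C b \<longleftrightarrow>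
     (\<exists>lam z. qep_minimizer A C b lam z \<and> b0_vec A C b \<bullet> z = 0)"

definition qep_easy_case :: "real^'n^'n \<Rightarrow> real^'m^'n \<Rightarrow> real^'m \<Rightarrow> bool" where
  "qep_easy_case A C b \<longleftrightarrow> \<not> qep_hard_case A C b"

definition crq_feasible :: "real^'m^'n \<Rightarrow> real^'m \<Rightarrow> real^'n \<Rightarrow> bool" where
  "crq_feasible C b v \<longleftrightarrow> v \<bullet> v = 1 \<and> transpose C *v v = b"

definition crq_minimizer :: "real^'n^'n \<Rightarrow> real^'m^'n \<Rightarrow> real^'m \<Rightarrow> real^'n \<Rightarrow> bool" where
  "crq_minimizer A C b v \<longleftrightarrow>
     crq_feasible C b v \<and> (\<forall>w. crq_feasible C b w \<longrightarrow> v \<bullet> (A *v v) \<le> w \<bullet> (A *v w))"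

end

theory Submission
  imports Defs
begin

text \<open>Write a feasible point as v = n0 + u with u in N(C^T) and |u| = \<gamma>. A minimizer v of
  CRQopt is a constrained stationary point, P (A v - \<lambda> v) = 0, and the second-order condition
  makes the shifted form x^T A x - \<lambda> x^T x positive semidefinite on N(C^T). If w \<noteq> v were
  another minimizer, d = w - v would be a null vector of this form, so (PAP - \<lambda> I) d = 0, and
  stationarity gives b0^T d = 0: the pair (\<lambda>, d) solves the QEP. It even minimizes it: an
  eigenpair (\<lambda>', z) with \<lambda>' < \<lambda> yields u with (PAP - \<lambda>' I) u = -b0 and |u| = \<gamma>, i.e. a
  feasible stationary point with multiplier \<lambda>' at which the shifted form is positive definite.
  That point is then the only minimizer, so it is v, whose multiplier is unique: \<lambda>' = \<lambda>.
  Hence QEPmin would be in the hard case.\<close>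

section \<open>The projector onto N(C^T)\<close>

lemma inner_transpose_matrix_vector:
  fixes A :: "real^'n^'m"
  shows "x \<bullet> (transpose A *v y) = (A *v x) \<bullet> y"
  by (metis dot_lmul_matrix inner_commute transpose_matrix_vector)

lemma inner_symmetric_matrix:
  fixes A :: "real^'n^'n"
  assumes "transpose A = A"
  shows "x \<bullet> (A *v y) = y \<bullet> (A *v x)"
  by (metis assms inner_transpose_matrix_vector inner_commute)

lemma inner_null_transpose_range:
  fixes C :: "real^'m^'n"
  assumes "transpose C *v x = 0"
  shows "x \<bullet> (C *v w) = 0"
  by (metis assms inner_commute inner_transpose_matrix_vector inner_zero_right)

lemma matrix_inv_invertible:
  fixes A :: "'a::semiring_1^'n^'m"
  assumes "invertible A"
  shows "A ** matrix_inv A = mat 1" and "matrix_inv A ** A = mat 1"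
  using someI_ex[OF assms[unfolded invertible_def]] unfolding matrix_inv_def by auto

lemma invertible_gram_matrix:
  fixes C :: "real^'m^'n"
  assumes "rank C = CARD('m)"
  shows "invertible (transpose C ** C)"
proof -
  have "x = 0" if "(transpose C ** C) *v x = 0" for x
  proof -
    have "(C *v x) \<bullet> (C *v x) = x \<bullet> ((transpose C ** C) *v x)"
      by (simp only: matrix_vector_mul_assoc[symmetric] inner_transpose_matrix_vector)
    with that have "C *v x = 0" by simp
    then show "x = 0"
      using assms full_rank_injective[of C] by (metis injD matrix_vector_mult_0_right)
  qed
  then show ?thesis
    by (simp add: invertible_left_inverse matrix_left_invertible_ker)
qed

lemma transpose_mult_n0_vec:
  fixes C :: "real^'m^'n"
  assumes "rank C = CARD('m)"
  shows "transpose C *v n0_vec C b = b"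
  unfolding n0_vec_def
  by (simp only: matrix_vector_mul_assoc matrix_mul_assoc
      matrix_inv_invertible(1)[OF invertible_gram_matrix[OF assms]] matrix_vector_mul_lid)

lemma inner_n0_vec_null:
  fixes C :: "real^'m^'n"
  assumes "transpose C *v x = 0"
  shows "x \<bullet> n0_vec C b = 0"
  unfolding n0_vec_def by (rule inner_null_transpose_range[OF assms])

lemma projP_mult:
  fixes C :: "real^'m^'n"
  shows "projP C *v y = y - C *v (matrix_inv (transpose C ** C) *v (transpose C *v y))"
  unfolding projP_def
  by (simp only: matrix_vector_mult_diff_rdistrib matrix_vector_mul_assoc[symmetric] matrix_vector_mul_lid)

lemma transpose_mult_projP:
  fixes C :: "real^'m^'n"
  assumes "rank C = CARD('m)"
  shows "transpose C *v (projP C *v y) = 0"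
  unfolding projP_mult
  by (simp only: matrix_vector_mult_diff_distrib matrix_vector_mul_assoc matrix_mul_assoc
      matrix_inv_invertible(1)[OF invertible_gram_matrix[OF assms]] matrix_mul_lid
      matrix_vector_mul_lid diff_self)

lemma projP_mult_null:
  fixes C :: "real^'m^'n"
  assumes "transpose C *v x = 0"
  shows "projP C *v x = x"
  unfolding projP_mult using assms by simp

lemma inner_projP_null:
  fixes C :: "real^'m^'n"
  assumes "transpose C *v x = 0"
  shows "x \<bullet> (projP C *v y) = x \<bullet> y"
  unfolding projP_mult using inner_null_transpose_range[OF assms] by (simp add: inner_diff_right)

lemma gam_squared:
  fixes C :: "real^'m^'n"
  assumes "norm (n0_vec C b) < 1"
  shows "(gam C b)\<^sup>2 = 1 - n0_vec C b \<bullet> n0_vec C b" and "0 < (gam C b)\<^sup>2"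
proof -
  have "n0_vec C b \<bullet> n0_vec C b < 1"
    using assms by (simp add: power2_norm_eq_inner[symmetric] power_less_one_iff abs_square_less_1)
  then show "(gam C b)\<^sup>2 = 1 - n0_vec C b \<bullet> n0_vec C b" and "0 < (gam C b)\<^sup>2"
    unfolding gam_def power2_norm_eq_inner by simp_all
qed

definition qep_matrix :: "real^'n^'n \<Rightarrow> real^'m^'n \<Rightarrow> real \<Rightarrow> real^'n^'n" where
  "qep_matrix A C lam = projP C ** A ** projP C - lam *\<^sub>R mat 1"

lemma qep_feasible_iff:
  "qep_feasible A C b lam z \<longleftrightarrow>
     z \<noteq> 0 \<and> transpose C *v z = 0 \<and>
     qep_matrix A C lam *v (qep_matrix A C lam *v z) =
       (inverse ((gam C b)\<^sup>2) * (b0_vec A C b \<bullet> z)) *\<^sub>R b0_vec A C b"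
  unfolding qep_feasible_def qep_matrix_def Let_def ..

lemma qep_matrix_mult_null:
  fixes C :: "real^'m^'n"
  assumes "transpose C *v x = 0"
  shows "qep_matrix A C lam *v x = projP C *v (A *v x) - lam *\<^sub>R x"
  unfolding qep_matrix_def
  by (simp add: matrix_vector_mult_diff_rdistrib matrix_vector_mul_assoc[symmetric]
      scaleR_matrix_vector_assoc[symmetric] projP_mult_null[OF assms] del: transpose_matrix_vector)

lemma transpose_mult_qep_matrix:
  fixes C :: "real^'m^'n"
  assumes "rank C = CARD('m)" and "transpose C *v x = 0"
  shows "transpose C *v (qep_matrix A C lam *v x) = 0"
  using assms
  by (simp add: qep_matrix_mult_null transpose_mult_projP matrix_vector_mult_diff_distrib
      matrix_vector_mult_scaleR del: transpose_matrix_vector)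

lemma inner_qep_matrix:
  fixes C :: "real^'m^'n"
  assumes "transpose C *v x = 0" and "transpose C *v w = 0"
  shows "x \<bullet> (qep_matrix A C lam *v w) = x \<bullet> (A *v w) - lam * (x \<bullet> w)"
  by (simp add: qep_matrix_mult_null[OF assms(2)] inner_projP_null[OF assms(1)] inner_diff_right)

section \<open>Feasible points and optimality conditions of CRQopt\<close>

lemma crq_feasible_iff:
  fixes C :: "real^'m^'n"
  assumes "rank C = CARD('m)" and "norm (n0_vec C b) < 1"
  shows "crq_feasible C b v \<longleftrightarrow>
    transpose C *v (v - n0_vec C b) = 0 \<and> (v - n0_vec C b) \<bullet> (v - n0_vec C b) = (gam C b)\<^sup>2"
proof -
  define n where "n = n0_vec C b"
  have "transpose C *v v = b \<longleftrightarrow> transpose C *v (v - n) = 0"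
    using transpose_mult_n0_vec[OF assms(1)]
    by (simp add: n_def matrix_vector_mult_diff_distrib del: transpose_matrix_vector)
  moreover have "v \<bullet> v = n \<bullet> n + (v - n) \<bullet> (v - n)" if "transpose C *v (v - n) = 0"
    using inner_n0_vec_null[OF that] by (simp add: n_def algebra_simps inner_commute)
  ultimately show ?thesis
    unfolding crq_feasible_def gam_squared(1)[OF assms(2)] n_def[symmetric] by auto
qed

lemma crq_feasible_exists:
  fixes C :: "real^'m^'n"
  assumes "rank C = CARD('m)" and "CARD('m) < CARD('n)" and "norm (n0_vec C b) < 1"
  shows "\<exists>v. crq_feasible C b v"
proof -
  have "rank (transpose C) \<noteq> CARD('n)"
    using assms(1,2) rank_transpose[of C] by simp
  then obtain z where "z \<noteq> 0" and z: "transpose C *v z = 0"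
    using matrix_nonfull_linear_equations_eq by blast
  define u where "u = (gam C b / norm z) *\<^sub>R z"
  have "transpose C *v u = 0"
    using z by (simp add: u_def matrix_vector_mult_scaleR del: transpose_matrix_vector)
  moreover have "u \<bullet> u = (gam C b)\<^sup>2"
    using \<open>z \<noteq> 0\<close> by (simp add: u_def power2_norm_eq_inner[symmetric] power_divide)
  ultimately have "crq_feasible C b (n0_vec C b + u)"
    using crq_feasible_iff[OF assms(1,3)] by simp
  then show ?thesis ..
qed

lemma crq_minimizer_exists:
  fixes A :: "real^'n^'n" and C :: "real^'m^'n"
  assumes "rank C = CARD('m)" and "CARD('m) < CARD('n)" and "norm (n0_vec C b) < 1"
  shows "\<exists>v. crq_minimizer A C b v"
proof -
  define F where "F = {v. v \<bullet> v = 1} \<inter> {v. transpose C *v v = b}"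
  have "F \<noteq> {}"
    using crq_feasible_exists[OF assms] by (auto simp: F_def crq_feasible_def)
  moreover have "closed F"
    unfolding F_def
    by (intro closed_Int closed_Collect_eq continuous_intros linear_continuous_on
        matrix_vector_mul_bounded_linear)
  moreover have "bounded F"
    by (rule bounded_subset[OF bounded_cball[of 0 1]]) (auto simp: F_def norm_eq_sqrt_inner)
  moreover have "continuous_on F (\<lambda>v. v \<bullet> (A *v v))"
    by (intro continuous_on_inner continuous_on_id linear_continuous_on
        matrix_vector_mul_bounded_linear)
  ultimately obtain v where "v \<in> F" and "\<forall>w\<in>F. v \<bullet> (A *v v) \<le> w \<bullet> (A *v w)"
    using continuous_attains_inf[of F] compact_eq_bounded_closed by blast
  then show ?thesis
    unfolding crq_minimizer_def crq_feasible_def F_def by auto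
qed

definition shifted_form :: "real^'n^'n \<Rightarrow> real \<Rightarrow> real^'n \<Rightarrow> real" where
  "shifted_form A lam x = x \<bullet> (A *v x) - lam * (x \<bullet> x)"

lemma shifted_form_add:
  fixes A :: "real^'n^'n"
  assumes "transpose A = A"
  shows "shifted_form A lam (x + t *\<^sub>R y) =
    shifted_form A lam x + 2 * t * (y \<bullet> (A *v x) - lam * (y \<bullet> x)) + t\<^sup>2 * shifted_form A lam y"
  using inner_symmetric_matrix[OF assms, of x y]
  by (simp add: shifted_form_def algebra_simps inner_commute power2_eq_square)

lemma shifted_form_scaleR: "shifted_form A lam (t *\<^sub>R x) = t\<^sup>2 * shifted_form A lam x"
  by (simp add: shifted_form_def algebra_simps power2_eq_square)

text \<open>The Lagrange condition P (A v - lam v) = 0 of CRQopt with multiplier lam.\<close>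
definition crq_stationary :: "real^'n^'n \<Rightarrow> real^'m^'n \<Rightarrow> real^'n \<Rightarrow> real \<Rightarrow> bool" where
  "crq_stationary A C v lam \<longleftrightarrow> (\<forall>x. transpose C *v x = 0 \<longrightarrow> x \<bullet> (A *v v) = lam * (x \<bullet> v))"

lemma crq_objective_diff:
  fixes A :: "real^'n^'n" and C :: "real^'m^'n"
  assumes "transpose A = A" and "crq_feasible C b v" and "crq_stationary A C v lam"
    and "crq_feasible C b w"
  shows "w \<bullet> (A *v w) - v \<bullet> (A *v v) = shifted_form A lam (w - v)"
proof -
  have "transpose C *v (w - v) = 0"
    using assms(2,4)
    by (simp add: crq_feasible_def matrix_vector_mult_diff_distrib del: transpose_matrix_vector)
  then have "(w - v) \<bullet> (A *v v) - lam * ((w - v) \<bullet> v) = 0"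
    using assms(3) by (simp add: crq_stationary_def del: transpose_matrix_vector)
  moreover have "shifted_form A lam w = shifted_form A lam v
      + 2 * ((w - v) \<bullet> (A *v v) - lam * ((w - v) \<bullet> v)) + shifted_form A lam (w - v)"
    using shifted_form_add[OF assms(1), of lam v 1 "w - v"] by simp
  ultimately show ?thesis
    using assms(2,4) by (simp add: shifted_form_def crq_feasible_def)
qed

lemma crq_stationary_unique:
  fixes A :: "real^'n^'n" and C :: "real^'m^'n"
  assumes "rank C = CARD('m)" and "norm (n0_vec C b) < 1" and "crq_feasible C b v"
    and "crq_stationary A C v lam" and "crq_stationary A C v lam'"
  shows "lam = lam'"
proof -
  define u where "u = v - n0_vec C b"
  have u: "transpose C *v u = 0" "u \<bullet> u = (gam C b)\<^sup>2"
    using assms(3) crq_feasible_iff[OF assms(1,2)] by (simp_all add: u_def)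
  have "u \<bullet> v = (gam C b)\<^sup>2"
    using inner_n0_vec_null[OF u(1)] u(2) by (simp add: u_def inner_diff_right)
  moreover have "lam * (u \<bullet> v) = lam' * (u \<bullet> v)"
    using assms(4,5) u(1) unfolding crq_stationary_def by metis
  ultimately show ?thesis
    using gam_squared(2)[OF assms(2)] by simp
qed

lemma crq_feasible_rotate:
  fixes C :: "real^'m^'n"
  assumes "rank C = CARD('m)" and "norm (n0_vec C b) < 1" and "crq_feasible C b v"
    and "transpose C *v w = 0" and "w \<bullet> (v - n0_vec C b) = 0"
    and "w \<bullet> w = (v - n0_vec C b) \<bullet> (v - n0_vec C b)"
  shows "crq_feasible C b (v + (cos t - 1) *\<^sub>R (v - n0_vec C b) + sin t *\<^sub>R w)"
proof -
  define u where "u = v - n0_vec C b"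
  have u: "transpose C *v u = 0" "u \<bullet> u = (gam C b)\<^sup>2"
    using assms(3) crq_feasible_iff[OF assms(1,2)] by (simp_all add: u_def)
  have "(cos t *\<^sub>R u + sin t *\<^sub>R w) \<bullet> (cos t *\<^sub>R u + sin t *\<^sub>R w)
      = (cos t)\<^sup>2 * (u \<bullet> u) + (sin t)\<^sup>2 * (u \<bullet> u)"
    using assms(5,6) unfolding u_def[symmetric]
    by (simp add: inner_add_left inner_add_right inner_commute power2_eq_square)
  also have "\<dots> = (gam C b)\<^sup>2"
    using u(2) by (simp flip: distrib_right)
  finally have norm: "(cos t *\<^sub>R u + sin t *\<^sub>R w) \<bullet> (cos t *\<^sub>R u + sin t *\<^sub>R w) = (gam C b)\<^sup>2" .
  have null: "transpose C *v (cos t *\<^sub>R u + sin t *\<^sub>R w) = 0"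
    using u(1) assms(4)
    by (simp add: matrix_vector_right_distrib matrix_vector_mult_scaleR del: transpose_matrix_vector)
  have "v + (cos t - 1) *\<^sub>R u + sin t *\<^sub>R w - n0_vec C b = cos t *\<^sub>R u + sin t *\<^sub>R w"
    by (simp add: u_def algebra_simps)
  then show ?thesis
    unfolding crq_feasible_iff[OF assms(1,2)] u_def[symmetric] using norm null by (simp only:)
qed

lemma crq_minimizer_tangent:
  fixes A :: "real^'n^'n" and C :: "real^'m^'n"
  assumes "transpose A = A" and "rank C = CARD('m)" and "norm (n0_vec C b) < 1"
    and "crq_minimizer A C b v" and "transpose C *v w = 0" and "w \<bullet> (v - n0_vec C b) = 0"
  shows "w \<bullet> (A *v v) = 0"
proof (cases "w = 0")
  case False
  define u where "u = v - n0_vec C b"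
  define k where "k = norm u / norm w"
  define w' where "w' = k *\<^sub>R w"
  have u: "transpose C *v u = 0" "u \<bullet> u = (gam C b)\<^sup>2"
    using assms(4) crq_feasible_iff[OF assms(2,3)] by (simp_all add: u_def crq_minimizer_def)
  then have "k \<noteq> 0"
    using False gam_squared(2)[OF assms(3)] by (auto simp: k_def)
  have "transpose C *v w' = 0" and "w' \<bullet> u = 0" and "w' \<bullet> w' = u \<bullet> u"
    using assms(5,6) False
    by (simp_all add: w'_def k_def u_def matrix_vector_mult_scaleR power2_norm_eq_inner[symmetric]
        power_divide del: transpose_matrix_vector)
  then have feasible: "crq_feasible C b (v + (cos t - 1) *\<^sub>R u + sin t *\<^sub>R w')" for t
    using assms(4) crq_feasible_rotate[OF assms(2,3), of v w' t]
    by (simp add: u_def crq_minimizer_def)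
  define \<phi> where "\<phi> t = shifted_form A 0 (v + (cos t - 1) *\<^sub>R u + sin t *\<^sub>R w')" for t
  have min: "\<phi> 0 \<le> \<phi> t" for t
    using assms(4) feasible[of t] by (simp add: \<phi>_def shifted_form_def crq_minimizer_def)
  have "\<phi> = (\<lambda>t. shifted_form A 0 v + 2 * (cos t - 1) * (u \<bullet> (A *v v))
      + (cos t - 1)\<^sup>2 * shifted_form A 0 u
      + 2 * sin t * (w' \<bullet> (A *v v) + (cos t - 1) * (w' \<bullet> (A *v u)))
      + (sin t)\<^sup>2 * shifted_form A 0 w')"
    by (simp add: \<phi>_def fun_eq_iff shifted_form_add[OF assms(1)] matrix_vector_right_distrib
        matrix_vector_mult_scaleR inner_add_right)
  then have "(\<phi> has_real_derivative 2 * (w' \<bullet> (A *v v))) (at 0)"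
    by (auto intro!: derivative_eq_intros)
  then have "2 * (w' \<bullet> (A *v v)) = 0"
    by (rule DERIV_local_min[OF _ zero_less_one]) (simp add: min)
  then show ?thesis
    using \<open>k \<noteq> 0\<close> by (simp add: w'_def)
qed simp

lemma crq_minimizer_stationary:
  fixes A :: "real^'n^'n" and C :: "real^'m^'n"
  assumes "transpose A = A" and "rank C = CARD('m)" and "norm (n0_vec C b) < 1"
    and "crq_minimizer A C b v"
  shows "\<exists>lam. crq_stationary A C v lam"
proof -
  define u where "u = v - n0_vec C b"
  have u: "transpose C *v u = 0" "u \<bullet> u = (gam C b)\<^sup>2"
    using assms(4) crq_feasible_iff[OF assms(2,3)] by (simp_all add: u_def crq_minimizer_def)
  have "u \<bullet> u \<noteq> 0"
    using u(2) gam_squared(2)[OF assms(3)] by simp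
  define lam where "lam = (u \<bullet> (A *v v)) / (u \<bullet> u)"
  have "x \<bullet> (A *v v) = lam * (x \<bullet> v)" if x: "transpose C *v x = 0" for x
  proof -
    define c where "c = (x \<bullet> u) / (u \<bullet> u)"
    have "transpose C *v (x - c *\<^sub>R u) = 0"
      using x u(1) by (simp add: matrix_vector_mult_diff_distrib matrix_vector_mult_scaleR
          del: transpose_matrix_vector)
    moreover have "(x - c *\<^sub>R u) \<bullet> u = 0"
      using \<open>u \<bullet> u \<noteq> 0\<close> by (simp add: c_def inner_diff_left)
    ultimately have "(x - c *\<^sub>R u) \<bullet> (A *v v) = 0"
      using crq_minimizer_tangent[OF assms] by (simp add: u_def)
    then have "x \<bullet> (A *v v) = lam * (x \<bullet> u)"
      by (simp add: lam_def c_def inner_diff_left)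
    also have "x \<bullet> u = x \<bullet> v"
      using inner_n0_vec_null[OF x] by (simp add: u_def inner_diff_right)
    finally show ?thesis .
  qed
  then show ?thesis
    unfolding crq_stationary_def by blast
qed

lemma crq_minimizer_shifted_form_nonneg:
  fixes A :: "real^'n^'n" and C :: "real^'m^'n"
  assumes "transpose A = A" and "rank C = CARD('m)" and "norm (n0_vec C b) < 1"
    and "crq_minimizer A C b v" and "crq_stationary A C v lam" and "transpose C *v x = 0"
  shows "0 \<le> shifted_form A lam x"
proof -
  have v: "crq_feasible C b v"
    using assms(4) by (simp add: crq_minimizer_def)
  have oblique: "0 \<le> shifted_form A lam y" if y: "transpose C *v y = 0" "y \<bullet> v \<noteq> 0" for y
  proof -
    have "y \<bullet> y \<noteq> 0"
      using y(2) by auto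
    define t where "t = - 2 * (y \<bullet> v) / (y \<bullet> y)"
    have "t \<noteq> 0"
      using y(2) \<open>y \<bullet> y \<noteq> 0\<close> by (simp add: t_def)
    have "transpose C *v (v + t *\<^sub>R y) = b"
      using v y(1) by (simp add: crq_feasible_def matrix_vector_right_distrib
          matrix_vector_mult_scaleR del: transpose_matrix_vector)
    moreover have "(v + t *\<^sub>R y) \<bullet> (v + t *\<^sub>R y) = v \<bullet> v + t * (2 * (y \<bullet> v) + t * (y \<bullet> y))"
      by (simp add: inner_add_left inner_add_right inner_commute algebra_simps)
    moreover have "2 * (y \<bullet> v) + t * (y \<bullet> y) = 0"
      using \<open>y \<bullet> y \<noteq> 0\<close> by (simp add: t_def)
    ultimately have "crq_feasible C b (v + t *\<^sub>R y)"
      using v by (simp add: crq_feasible_def)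
    then have "0 \<le> shifted_form A lam (t *\<^sub>R y)"
      using crq_objective_diff[OF assms(1) v assms(5)] assms(4)
      by (fastforce simp: crq_minimizer_def)
    then show ?thesis
      using \<open>t \<noteq> 0\<close> by (simp add: shifted_form_scaleR zero_le_mult_iff)
  qed
  show ?thesis
  proof (cases "x \<bullet> v = 0")
    case True
    define u where "u = v - n0_vec C b"
    have u: "transpose C *v u = 0" "u \<bullet> u = (gam C b)\<^sup>2"
      using v crq_feasible_iff[OF assms(2,3)] by (simp_all add: u_def)
    have "u \<bullet> v = (gam C b)\<^sup>2"
      using inner_n0_vec_null[OF u(1)] u(2) by (simp add: u_def inner_diff_right)
    then have "0 \<le> shifted_form A lam (x + s *\<^sub>R u)" if "s \<noteq> 0" for s
      using oblique[of "x + s *\<^sub>R u"] that True gam_squared(2)[OF assms(3)] u(1) assms(6)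
      by (simp add: inner_add_left matrix_vector_right_distrib matrix_vector_mult_scaleR
          del: transpose_matrix_vector)
    then have ev: "\<forall>\<^sub>F s in at 0. 0 \<le> shifted_form A lam x + 2 * s * (u \<bullet> (A *v x) - lam * (u \<bullet> x))
        + s\<^sup>2 * shifted_form A lam u"
      by (auto simp: eventually_at_filter shifted_form_add[OF assms(1)])
    have "((\<lambda>s. shifted_form A lam x + 2 * s * (u \<bullet> (A *v x) - lam * (u \<bullet> x))
        + s\<^sup>2 * shifted_form A lam u) \<longlongrightarrow> shifted_form A lam x) (at 0)"
      by (auto intro!: tendsto_eq_intros)
    then show ?thesis
      using ev by (rule tendsto_lowerbound) simp
  qed (use oblique assms(6) in blast)
qed

section \<open>Minimizers of CRQopt and solutions of the QEP\<close>

lemma shifted_form_null_imp_qep_matrix_null: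
  fixes A :: "real^'n^'n" and C :: "real^'m^'n"
  assumes "transpose A = A" and "rank C = CARD('m)"
    and "\<And>x. transpose C *v x = 0 \<Longrightarrow> 0 \<le> shifted_form A lam x"
    and "transpose C *v d = 0" and "shifted_form A lam d = 0"
  shows "qep_matrix A C lam *v d = 0"
proof -
  define r where "r = qep_matrix A C lam *v d"
  have r: "transpose C *v r = 0"
    using transpose_mult_qep_matrix[OF assms(2,4)] by (simp add: r_def)
  define \<phi> where "\<phi> t = shifted_form A lam (d + t *\<^sub>R r)" for t
  have "\<phi> = (\<lambda>t. 2 * t * (r \<bullet> r) + t\<^sup>2 * shifted_form A lam r)"
    using inner_qep_matrix[OF r assms(4)]
    by (simp add: \<phi>_def fun_eq_iff shifted_form_add[OF assms(1)] assms(5) r_def)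
  then have "(\<phi> has_real_derivative 2 * (r \<bullet> r)) (at 0)"
    by (auto intro!: derivative_eq_intros)
  moreover have min: "\<phi> 0 \<le> \<phi> t" for t
    using assms(3)[of "d + t *\<^sub>R r"] assms(4,5) r
    by (simp add: \<phi>_def matrix_vector_right_distrib matrix_vector_mult_scaleR del: transpose_matrix_vector)
  ultimately have "2 * (r \<bullet> r) = 0"
    using DERIV_local_min[OF _ zero_less_one] by blast
  then show ?thesis
    by (simp add: r_def)
qed

lemma inner_b0_vec_qep_matrix_null:
  fixes A :: "real^'n^'n" and C :: "real^'m^'n"
  assumes "transpose A = A" and "rank C = CARD('m)" and "crq_feasible C b v"
    and "crq_stationary A C v lam" and "transpose C *v d = 0" and "qep_matrix A C lam *v d = 0"
  shows "b0_vec A C b \<bullet> d = 0"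
proof -
  define u where "u = v - n0_vec C b"
  have u: "transpose C *v u = 0"
    using assms(3) transpose_mult_n0_vec[OF assms(2)]
    by (simp add: u_def crq_feasible_def matrix_vector_mult_diff_distrib del: transpose_matrix_vector)
  have "b0_vec A C b \<bullet> d = d \<bullet> (A *v v) - d \<bullet> (A *v u)"
    using inner_projP_null[OF assms(5)]
    by (simp add: b0_vec_def u_def inner_commute matrix_vector_mult_diff_distrib inner_diff_right)
  also have "d \<bullet> (A *v v) = lam * (d \<bullet> u)"
    using assms(4,5) inner_n0_vec_null[OF assms(5)]
    by (simp add: crq_stationary_def u_def inner_diff_right del: transpose_matrix_vector)
  also have "d \<bullet> (A *v u) = lam * (d \<bullet> u)"
    using inner_qep_matrix[OF u assms(5), where A = A and lam = lam] assms(6)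
      inner_symmetric_matrix[OF assms(1), of d u]
    by (simp add: inner_commute)
  finally show ?thesis
    by simp
qed

lemma qep_matrix_eq_b0_vec_imp_stationary:
  fixes A :: "real^'n^'n" and C :: "real^'m^'n"
  assumes "transpose C *v u = 0" and "qep_matrix A C lam *v u = - b0_vec A C b"
  shows "crq_stationary A C (n0_vec C b + u) lam"
  unfolding crq_stationary_def
proof (intro allI impI)
  fix x
  assume x: "transpose C *v x = 0"
  have "x \<bullet> (A *v u) - lam * (x \<bullet> u) = - (x \<bullet> (A *v n0_vec C b))"
    using inner_qep_matrix[OF x assms(1), where A = A and lam = lam] inner_projP_null[OF x] assms(2)
    by (simp add: b0_vec_def)
  then show "x \<bullet> (A *v (n0_vec C b + u)) = lam * (x \<bullet> (n0_vec C b + u))"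
    using inner_n0_vec_null[OF x] by (simp add: matrix_vector_right_distrib inner_add_right)
qed

lemma qep_feasible_imp_crq_stationary:
  fixes A :: "real^'n^'n" and C :: "real^'m^'n"
  assumes "transpose A = A" and "rank C = CARD('m)" and "norm (n0_vec C b) < 1"
    and "qep_feasible A C b lam z"
    and posdef: "\<And>x. transpose C *v x = 0 \<Longrightarrow> x \<noteq> 0 \<Longrightarrow> 0 < shifted_form A lam x"
  shows "\<exists>v. crq_feasible C b v \<and> crq_stationary A C v lam"
proof -
  define M where "M = qep_matrix A C lam"
  define b0 where "b0 = b0_vec A C b"
  define c where "c = (b0 \<bullet> z) / (gam C b)\<^sup>2"
  define y where "y = M *v z"
  have z: "z \<noteq> 0" "transpose C *v z = 0" and My: "M *v y = c *\<^sub>R b0"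
    using assms(4) by (simp_all add: qep_feasible_iff M_def b0_def c_def y_def divide_inverse_commute)
  have y: "transpose C *v y = 0"
    using transpose_mult_qep_matrix[OF assms(2) z(2)] by (simp add: y_def M_def)
  have "y \<bullet> y = z \<bullet> (M *v y)"
    using inner_qep_matrix[OF y z(2)] inner_qep_matrix[OF z(2) y]
      inner_symmetric_matrix[OF assms(1), of y z]
    by (simp add: M_def y_def inner_commute)
  also have "\<dots> = c\<^sup>2 * (gam C b)\<^sup>2"
    using gam_squared(2)[OF assms(3)] by (simp add: My c_def inner_commute power2_eq_square)
  finally have yy: "y \<bullet> y = c\<^sup>2 * (gam C b)\<^sup>2" .
  have "c \<noteq> 0"
  proof
    assume "c = 0"
    then have "shifted_form A lam z = 0"
      using yy inner_qep_matrix[OF z(2) z(2), where A = A and lam = lam]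
      by (simp add: shifted_form_def y_def M_def)
    then show False
      using posdef[OF z(2,1)] by simp
  qed
  define u where "u = (- 1 / c) *\<^sub>R y"
  have u: "transpose C *v u = 0"
    by (simp only: u_def matrix_vector_mult_scaleR y scaleR_zero_right)
  have "M *v u = (- 1 / c) *\<^sub>R (M *v y)"
    by (simp only: u_def matrix_vector_mult_scaleR)
  then have "qep_matrix A C lam *v u = - b0_vec A C b"
    using \<open>c \<noteq> 0\<close> My by (simp add: M_def b0_def)
  then have "crq_stationary A C (n0_vec C b + u) lam"
    by (rule qep_matrix_eq_b0_vec_imp_stationary[OF u])
  moreover have "crq_feasible C b (n0_vec C b + u)"
    using u yy \<open>c \<noteq> 0\<close> crq_feasible_iff[OF assms(2,3)] by (simp add: u_def power2_eq_square)
  ultimately show ?thesis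
    by blast
qed

lemma crq_stationary_posdef_imp_minimizer_eq:
  fixes A :: "real^'n^'n" and C :: "real^'m^'n"
  assumes "transpose A = A" and "crq_feasible C b v" and "crq_stationary A C v lam"
    and posdef: "\<And>x. transpose C *v x = 0 \<Longrightarrow> x \<noteq> 0 \<Longrightarrow> 0 < shifted_form A lam x"
    and "crq_minimizer A C b w"
  shows "w = v"
proof (rule ccontr)
  assume "w \<noteq> v"
  have w: "crq_feasible C b w" "w \<bullet> (A *v w) \<le> v \<bullet> (A *v v)"
    using assms(2,5) by (auto simp: crq_minimizer_def)
  then have "transpose C *v (w - v) = 0"
    using assms(2) by (simp add: crq_feasible_def matrix_vector_mult_diff_distrib del: transpose_matrix_vector)
  then have "0 < shifted_form A lam (w - v)"
    using posdef \<open>w \<noteq> v\<close> by simp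
  then show False
    using crq_objective_diff[OF assms(1-3) w(1)] w(2) by simp
qed

lemma crq_multiplier_le_qep_eigenvalue:
  fixes A :: "real^'n^'n" and C :: "real^'m^'n"
  assumes "transpose A = A" and "rank C = CARD('m)" and "norm (n0_vec C b) < 1"
    and "crq_minimizer A C b v" and "crq_stationary A C v lam" and "qep_feasible A C b lam' z"
  shows "lam \<le> lam'"
proof (rule ccontr)
  assume "\<not> lam \<le> lam'"
  have posdef: "0 < shifted_form A lam' x" if "transpose C *v x = 0" "x \<noteq> 0" for x
  proof -
    have "0 \<le> shifted_form A lam x"
      using crq_minimizer_shifted_form_nonneg[OF assms(1-5) that(1)] .
    moreover have "0 < (lam - lam') * (x \<bullet> x)"
      using \<open>\<not> lam \<le> lam'\<close> that(2) by simp
    ultimately show ?thesis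
      by (simp add: shifted_form_def algebra_simps)
  qed
  then obtain v' where v': "crq_feasible C b v'" "crq_stationary A C v' lam'"
    using qep_feasible_imp_crq_stationary[OF assms(1-3,6)] by blast
  then have "v = v'"
    using crq_stationary_posdef_imp_minimizer_eq[OF assms(1) v' posdef assms(4)] by blast
  then have "lam = lam'"
    using crq_stationary_unique[OF assms(2,3) v'(1) _ v'(2)] assms(5) by simp
  then show False
    using \<open>\<not> lam \<le> lam'\<close> by simp
qed

lemma two_crq_minimizers_imp_qep_hard_case:
  fixes A :: "real^'n^'n" and C :: "real^'m^'n"
  assumes "transpose A = A" and "rank C = CARD('m)" and "norm (n0_vec C b) < 1"
    and "crq_minimizer A C b v" and "crq_minimizer A C b w" and "w \<noteq> v"
  shows "qep_hard_case A C b"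
proof -
  obtain lam where lam: "crq_stationary A C v lam"
    using crq_minimizer_stationary[OF assms(1-4)] by blast
  have v: "crq_feasible C b v" and w: "crq_feasible C b w"
    using assms(4,5) by (simp_all add: crq_minimizer_def)
  define d where "d = w - v"
  have d: "transpose C *v d = 0" "d \<noteq> 0"
    using v w assms(6)
    by (simp_all add: d_def crq_feasible_def matrix_vector_mult_diff_distrib del: transpose_matrix_vector)
  have "w \<bullet> (A *v w) = v \<bullet> (A *v v)"
    using assms(4,5) v w by (simp add: crq_minimizer_def order_antisym)
  then have "shifted_form A lam d = 0"
    using crq_objective_diff[OF assms(1) v lam w] by (simp add: d_def)
  then have Md: "qep_matrix A C lam *v d = 0"
    using shifted_form_null_imp_qep_matrix_null[OF assms(1,2) _ d(1)]
      crq_minimizer_shifted_form_nonneg[OF assms(1-4) lam] by blast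
  then have b0: "b0_vec A C b \<bullet> d = 0"
    using inner_b0_vec_qep_matrix_null[OF assms(1,2) v lam d(1)] by blast
  then have "qep_feasible A C b lam d"
    using d Md by (simp add: qep_feasible_iff)
  then have "qep_minimizer A C b lam d"
    using crq_multiplier_le_qep_eigenvalue[OF assms(1-4) lam] by (auto simp: qep_minimizer_def)
  then show ?thesis
    using b0 by (auto simp: qep_hard_case_def)
qed

theorem theorem2p13:
  fixes A :: "real^'n^'n" and C :: "real^'m^'n" and b :: "real^'m"
  assumes "transpose A = A"
    and "CARD('m) < CARD('n)"
    and "rank C = CARD('m)"
    and "norm (n0_vec C b) < 1"
    and "b0_vec A C b \<noteq> 0"
    and "qep_easy_case A C b"
  shows "\<exists>!v. crq_minimizer A C b v"
proof -
  obtain v where v: "crq_minimizer A C b v"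
    using crq_minimizer_exists[OF assms(3,2,4)] by blast
  have "w = v" if "crq_minimizer A C b w" for w
    using two_crq_minimizers_imp_qep_hard_case[OF assms(1,3,4) v that] assms(6)
    by (auto simp: qep_easy_case_def)
  with v show ?thesis
    by blast
qed

end
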